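(* Let $V$ be a simple Yetter-Drinfeld module over $H=B(n,w,\gamma)$ with $\dim_\Bbbk V=p+1$ for some $p\ge0$. For any standard element $v\in V$, the set $\{v,y\cdot v,\dots,y^p\cdot v\}$ is a basis of $V$.
   Context: $\Bbbk$ is an algebraically closed field of characteristic $0$; $n,w$ positive integers, $\gamma$ a primitive $n$-th root of unity. $H=B(n,w,\gamma)$ is the Hopf algebra generated by $x^{\pm1},g,y$ with relations $xx^{-1}=x^{-1}x=1$, $xg=gx$, $xy=yx$, $yg=\gamma gy$, $y^n=1-x^w=1-g^n$, with $\Delta(x)=x\otimes x$, $\Delta(g)=g\otimes g$, $\Delta(y)=y\otimes g+1\otimes y$, $\varepsilon(x)=\varepsilon(g)=1$, $\varepsilon(y)=0$, $S(x)=x^{-1}$, $S(g)=g^{-1}$, $S(y)=-yg^{-1}$; $G(H)=\{g^jx^k\}$. A (left-left) Yetter-Drinfeld module is a left $H$-module, left $H$-comodule $(V,\cdot,\delta)$ with $\delta(h\cdot v)=h_{(1)}v_{(-1)}S(h_{(3)})\otimes h_{(2)}\cdot v_{(0)}$; simple means no nonzero proper Yetter-Drinfeld submodules. A nonzero $v\in V$ is a standard element of type $(\alpha,\beta,h)$ if $h\in G(H)$, $\alpha,\beta\in\Bbbk^*$, $x\cdot v=\alpha v$, $g\cdot v=\beta v$, $\delta(v)=h\otimes v$. *)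

theory Defs
  imports Main "HOL-Computational_Algebra.Polynomial"
begin

text \<open>The Hopf algebra H = B(n,w,gamma) is represented by its PBW basis
  g^j x^k y^i (0 <= i < n, 0 <= j < n, k in Z); the index (i,j,k) stands for g^j x^k y^i.
  Elements of H are finitely supported coefficient functions on such indices,
  H (x) H and H (x) H (x) H are coefficient functions on pairs / triples of indices,
  and H (x) V is represented by V-valued coefficient functions on indices.\<close>

type_synonym idx = "nat \<times> nat \<times> int"

definition Bidx :: "nat \<Rightarrow> idx set" where
  "Bidx n = {(i, j, k). i < n \<and> j < n}"

definition supp :: "('a \<Rightarrow> 'b::zero) \<Rightarrow> 'a set" where
  "supp f = {c. f c \<noteq> 0}"

definition ind :: "'a \<Rightarrow> 'a \<Rightarrow> 'k::field" where
  "ind b = (\<lambda>c. if c = b then 1 else 0)"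

text \<open>mono n w j k i = the element g^j x^k y^i, written in the basis (for j, i < 2n),
  using g^n = x^w and y^n = 1 - x^w.\<close>
definition mono :: "nat \<Rightarrow> nat \<Rightarrow> nat \<Rightarrow> int \<Rightarrow> nat \<Rightarrow> idx \<Rightarrow> 'k::field" where
  "mono n w j k i =
     (let j' = (if j < n then j else j - n);
          k' = (if j < n then k else k + int w)
      in if i < n then ind (i, j', k')
         else (\<lambda>c. ind (i - n, j', k') c - ind (i - n, j', k' + int w) c))"

definition bmul :: "nat \<Rightarrow> nat \<Rightarrow> 'k::field \<Rightarrow> idx \<Rightarrow> idx \<Rightarrow> idx \<Rightarrow> 'k" where
  "bmul n w \<gamma> b b' = (case b of (i, j, k) \<Rightarrow> case b' of (i', j', k') \<Rightarrow>
      (\<lambda>c. \<gamma> ^ (i * j') * mono n w (j + j') (k + k') (i + i') c))"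

definition hmul :: "nat \<Rightarrow> nat \<Rightarrow> 'k::field \<Rightarrow> (idx \<Rightarrow> 'k) \<Rightarrow> (idx \<Rightarrow> 'k) \<Rightarrow> idx \<Rightarrow> 'k" where
  "hmul n w \<gamma> a b = (\<lambda>c. \<Sum>b1\<in>supp a. \<Sum>b2\<in>supp b. a b1 * b b2 * bmul n w \<gamma> b1 b2 c)"

definition hone :: "idx \<Rightarrow> 'k::field" where
  "hone = ind (0, 0, 0)"

definition hpow :: "nat \<Rightarrow> nat \<Rightarrow> 'k::field \<Rightarrow> (idx \<Rightarrow> 'k) \<Rightarrow> nat \<Rightarrow> idx \<Rightarrow> 'k" where
  "hpow n w \<gamma> a m = (hmul n w \<gamma> a ^^ m) hone"

definition x_el :: "idx \<Rightarrow> 'k::field" where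
  "x_el = ind (0, 0, 1)"

definition g_el :: "nat \<Rightarrow> nat \<Rightarrow> idx \<Rightarrow> 'k::field" where
  "g_el n w = mono n w 1 0 0"

definition y_el :: "nat \<Rightarrow> nat \<Rightarrow> idx \<Rightarrow> 'k::field" where
  "y_el n w = mono n w 0 0 1"

definition ginv_el :: "nat \<Rightarrow> nat \<Rightarrow> idx \<Rightarrow> 'k::field" where
  "ginv_el n w = mono n w (n - 1) (- int w) 0"

definition tens :: "('a \<Rightarrow> 'k::field) \<Rightarrow> ('a \<Rightarrow> 'k) \<Rightarrow> 'a \<times> 'a \<Rightarrow> 'k" where
  "tens a b = (\<lambda>(p, q). a p * b q)"

definition tmul :: "nat \<Rightarrow> nat \<Rightarrow> 'k::field \<Rightarrow> (idx \<times> idx \<Rightarrow> 'k) \<Rightarrow> (idx \<times> idx \<Rightarrow> 'k) \<Rightarrow> idx \<times> idx \<Rightarrow> 'k" where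
  "tmul n w \<gamma> P Q = (\<lambda>(c1, c2). \<Sum>a\<in>supp P. \<Sum>b\<in>supp Q.
      P a * Q b * bmul n w \<gamma> (fst a) (fst b) c1 * bmul n w \<gamma> (snd a) (snd b) c2)"

definition Delta_y :: "nat \<Rightarrow> nat \<Rightarrow> idx \<times> idx \<Rightarrow> 'k::field" where
  "Delta_y n w = (\<lambda>pq. tens (y_el n w) (g_el n w) pq + tens hone (y_el n w) pq)"

definition Delta :: "nat \<Rightarrow> nat \<Rightarrow> 'k::field \<Rightarrow> idx \<Rightarrow> idx \<times> idx \<Rightarrow> 'k" where
  "Delta n w \<gamma> b = (case b of (i, j, k) \<Rightarrow>
     tmul n w \<gamma> (tens (ind (0, j, k)) (ind (0, j, k)))
       ((tmul n w \<gamma> (Delta_y n w) ^^ i) (tens hone hone)))"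

text \<open>(Delta (x) id) Delta on basis elements.\<close>
definition Delta2 :: "nat \<Rightarrow> nat \<Rightarrow> 'k::field \<Rightarrow> idx \<Rightarrow> idx \<times> idx \<times> idx \<Rightarrow> 'k" where
  "Delta2 n w \<gamma> b = (\<lambda>(b1, b2, b3).
     \<Sum>c\<in>{c. Delta n w \<gamma> b (c, b3) \<noteq> 0}. Delta n w \<gamma> b (c, b3) * Delta n w \<gamma> c (b1, b2))"

definition eps :: "idx \<Rightarrow> 'k::field" where
  "eps b = (case b of (i, j, k) \<Rightarrow> if i = 0 then 1 else 0)"

definition Santi :: "nat \<Rightarrow> nat \<Rightarrow> 'k::field \<Rightarrow> idx \<Rightarrow> idx \<Rightarrow> 'k" where
  "Santi n w \<gamma> b = (case b of (i, j, k) \<Rightarrow>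
     hmul n w \<gamma> (hpow n w \<gamma> (\<lambda>c. - hmul n w \<gamma> (y_el n w) (ginv_el n w) c) i)
       (hmul n w \<gamma> (hpow n w \<gamma> (ginv_el n w) j) (ind (0, 0, - k))))"

definition hact :: "('k::field \<Rightarrow> 'v::ab_group_add \<Rightarrow> 'v) \<Rightarrow> (idx \<Rightarrow> 'v \<Rightarrow> 'v) \<Rightarrow> (idx \<Rightarrow> 'k) \<Rightarrow> 'v \<Rightarrow> 'v" where
  "hact scale rho h v = (\<Sum>b\<in>supp h. scale (h b) (rho b v))"

text \<open>Left-left Yetter-Drinfeld module over B(n,w,gamma): V is the whole type 'v with
  scalar multiplication scale; rho b is the action of basis element b; the coaction is
  delta v = sum_c c (x) delta v c.\<close>
definition YD_module :: "nat \<Rightarrow> nat \<Rightarrow> 'k::field \<Rightarrow> ('k \<Rightarrow> 'v::ab_group_add \<Rightarrow> 'v)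
    \<Rightarrow> (idx \<Rightarrow> 'v \<Rightarrow> 'v) \<Rightarrow> ('v \<Rightarrow> idx \<Rightarrow> 'v) \<Rightarrow> bool" where
  "YD_module n w \<gamma> scale rho delta \<longleftrightarrow>
     vector_space scale \<and>
     \<comment> \<open>left H-module\<close>
     (\<forall>b\<in>Bidx n. Vector_Spaces.linear scale scale (rho b)) \<and>
     (\<forall>v. rho (0, 0, 0) v = v) \<and>
     (\<forall>b1\<in>Bidx n. \<forall>b2\<in>Bidx n. \<forall>v.
        rho b1 (rho b2 v) = hact scale rho (bmul n w \<gamma> b1 b2) v) \<and>
     \<comment> \<open>left H-comodule\<close>
     (\<forall>c. Vector_Spaces.linear scale scale (\<lambda>v. delta v c)) \<and>
     (\<forall>v. finite (supp (delta v)) \<and> supp (delta v) \<subseteq> Bidx n) \<and>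
     (\<forall>v. (\<Sum>c\<in>supp (delta v). scale (eps c) (delta v c)) = v) \<and>
     (\<forall>v b1 b2. delta (delta v b1) b2 =
        (\<Sum>c\<in>supp (delta v). scale (Delta n w \<gamma> c (b1, b2)) (delta v c))) \<and>
     \<comment> \<open>Yetter-Drinfeld compatibility (suffices on basis elements by linearity in h)\<close>
     (\<forall>b\<in>Bidx n. \<forall>v d. delta (rho b v) d =
        (\<Sum>t\<in>supp (Delta2 n w \<gamma> b). \<Sum>u\<in>supp (delta v).
           scale (Delta2 n w \<gamma> b t *
                  hmul n w \<gamma> (hmul n w \<gamma> (ind (fst t)) (ind u)) (Santi n w \<gamma> (snd (snd t))) d)
                 (rho (fst (snd t)) (delta v u))))"

definition YD_simple :: "nat \<Rightarrow> nat \<Rightarrow> 'k::field \<Rightarrow> ('k \<Rightarrow> 'v::ab_group_add \<Rightarrow> 'v)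
    \<Rightarrow> (idx \<Rightarrow> 'v \<Rightarrow> 'v) \<Rightarrow> ('v \<Rightarrow> idx \<Rightarrow> 'v) \<Rightarrow> bool" where
  "YD_simple n w \<gamma> scale rho delta \<longleftrightarrow>
     YD_module n w \<gamma> scale rho delta \<and> (UNIV :: 'v set) \<noteq> {0} \<and>
     (\<forall>W. module.subspace scale W \<and> (\<forall>b\<in>Bidx n. \<forall>u\<in>W. rho b u \<in> W) \<and>
          (\<forall>u\<in>W. \<forall>c. delta u c \<in> W) \<longrightarrow> W = {0} \<or> W = UNIV)"

text \<open>Standard element of type (alpha, beta, g^j x^k); every group-like g^j x^k (j in Z)
  equals a basis element with 0 <= j < n.\<close>
definition standard_elt :: "nat \<Rightarrow> nat \<Rightarrow> 'k::field \<Rightarrow> ('k \<Rightarrow> 'v::ab_group_add \<Rightarrow> 'v)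
    \<Rightarrow> (idx \<Rightarrow> 'v \<Rightarrow> 'v) \<Rightarrow> ('v \<Rightarrow> idx \<Rightarrow> 'v) \<Rightarrow> 'v \<Rightarrow> 'k \<Rightarrow> 'k \<Rightarrow> nat \<Rightarrow> int \<Rightarrow> bool" where
  "standard_elt n w \<gamma> scale rho delta v \<alpha> \<beta> j k \<longleftrightarrow>
     v \<noteq> 0 \<and> \<alpha> \<noteq> 0 \<and> \<beta> \<noteq> 0 \<and> j < n \<and>
     hact scale rho x_el v = scale \<alpha> v \<and>
     hact scale rho (g_el n w) v = scale \<beta> v \<and>
     (\<forall>c. delta v c = (if c = (0, j, k) then v else 0))"

end

theory Submission
  imports Defs
begin

text \<open>The H-submodule generated by a standard element v is a subcomodule as well, because
  v spans a subcomodule and the Yetter-Drinfeld condition expresses the coaction on h v through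
  that on v; by simplicity it is all of V. It is spanned by the vectors g^j x^k y^i v, and since
  g and x act on v by scalars and y^i g^j x^k = gamma^(i j) g^j x^k y^i, already by
  v, y v, ..., y^(n-1) v. Each y^i v is an eigenvector of g with eigenvalue beta gamma^(-i), and
  these eigenvalues are pairwise distinct because gamma is a primitive n-th root of unity, so the
  nonzero y^i v are linearly independent. As y^i v = 0 forces y^(i+1) v = 0, the nonzero ones
  are exactly v, ..., y^p v with p + 1 = dim V.\<close>

section \<open>Supports of products and coproducts\<close>

lemma supp_ind [simp]: "supp (ind b :: _ \<Rightarrow> 'k::field) = {b}"
  by (auto simp: supp_def ind_def)

lemma supp_scaled_ind: "(a::'k::field) \<noteq> 0 \<Longrightarrow> supp (\<lambda>c. a * ind b c) = {b}"
  by (auto simp: supp_def ind_def)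

lemma mono_eq_ind: "i < n \<Longrightarrow> j < n \<Longrightarrow> mono n w j k i = ind (i, j, k)"
  by (simp add: mono_def)

lemma bmul_eq_scaled_ind:
  "i + i' < n \<Longrightarrow> j + j' < n \<Longrightarrow>
   bmul n w \<gamma> (i, j, k) (i', j', k') = (\<lambda>c. \<gamma> ^ (i * j') * ind (i + i', j + j', k + k') c)"
  by (simp add: bmul_def mono_eq_ind)

lemma supp_mono_subset_Bidx:
  "j < 2 * n \<Longrightarrow> i < 2 * n \<Longrightarrow> supp (mono n w j k i :: _ \<Rightarrow> 'k::field) \<subseteq> Bidx n"
  by (auto simp: mono_def Let_def supp_def ind_def Bidx_def split: if_splits)

lemma supp_bmul_subset_Bidx:
  assumes "b1 \<in> Bidx n" "b2 \<in> Bidx n"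
  shows "supp (bmul n w (\<gamma>::'k::field) b1 b2) \<subseteq> Bidx n"
proof -
  obtain i j k i' j' k' where b: "b1 = (i, j, k)" "b2 = (i', j', k')" "i < n" "j < n" "i' < n" "j' < n"
    using assms by (auto simp: Bidx_def)
  have "supp (mono n w (j + j') (k + k') (i + i') :: _ \<Rightarrow> 'k) \<subseteq> Bidx n"
    using b by (intro supp_mono_subset_Bidx) auto
  then show ?thesis
    using b by (auto simp: bmul_def supp_def)
qed

lemma supp_tens_subset: "supp (tens a b) \<subseteq> supp a \<times> supp (b :: _ \<Rightarrow> 'k::field)"
  by (auto simp: supp_def tens_def)

lemma supp_tmul_subset_Bidx:
  assumes "supp P \<subseteq> Bidx n \<times> Bidx n" "supp Q \<subseteq> Bidx n \<times> Bidx n"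
  shows "supp (tmul n w (\<gamma>::'k::field) P Q) \<subseteq> Bidx n \<times> Bidx n"
proof
  fix c assume "c \<in> supp (tmul n w \<gamma> P Q)"
  then obtain c1 c2 where c: "c = (c1, c2)" and nz: "tmul n w \<gamma> P Q (c1, c2) \<noteq> 0"
    by (cases c) (auto simp: supp_def)
  then obtain a b where ab: "a \<in> supp P" "b \<in> supp Q"
    and "P a * Q b * bmul n w \<gamma> (fst a) (fst b) c1 * bmul n w \<gamma> (snd a) (snd b) c2 \<noteq> 0"
    unfolding tmul_def by (auto elim!: sum.not_neutral_contains_not_neutral)
  then have "c1 \<in> supp (bmul n w \<gamma> (fst a) (fst b))" "c2 \<in> supp (bmul n w \<gamma> (snd a) (snd b))"
    by (auto simp: supp_def)
  moreover have "fst a \<in> Bidx n" "snd a \<in> Bidx n" "fst b \<in> Bidx n" "snd b \<in> Bidx n"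
    using ab assms by (auto simp: mem_Times_iff)
  ultimately show "c \<in> Bidx n \<times> Bidx n"
    using c supp_bmul_subset_Bidx by blast
qed

lemma supp_y_el_subset_Bidx: "0 < n \<Longrightarrow> supp (y_el n w :: _ \<Rightarrow> 'k::field) \<subseteq> Bidx n"
  unfolding y_el_def by (rule supp_mono_subset_Bidx) auto

lemma supp_g_el_subset_Bidx: "0 < n \<Longrightarrow> supp (g_el n w :: _ \<Rightarrow> 'k::field) \<subseteq> Bidx n"
  unfolding g_el_def by (rule supp_mono_subset_Bidx) auto

lemma supp_Delta_y_subset_Bidx:
  assumes "0 < n"
  shows "supp (Delta_y n w :: _ \<Rightarrow> 'k::field) \<subseteq> Bidx n \<times> Bidx n"
proof -
  note supp_y_el_subset_Bidx[OF assms] supp_g_el_subset_Bidx[OF assms]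
  moreover have "supp (hone :: _ \<Rightarrow> 'k) \<subseteq> Bidx n"
    using assms by (simp add: hone_def Bidx_def)
  moreover have "supp (Delta_y n w :: _ \<Rightarrow> 'k) \<subseteq>
      supp (tens (y_el n w) (g_el n w) :: _ \<Rightarrow> 'k) \<union> supp (tens (hone :: _ \<Rightarrow> 'k) (y_el n w))"
    by (auto simp: Delta_y_def supp_def)
  ultimately show ?thesis
    using supp_tens_subset[of "y_el n w" "g_el n w"] supp_tens_subset[of hone "y_el n w"] by blast
qed

lemma supp_Delta_subset_Bidx:
  assumes "b \<in> Bidx n"
  shows "supp (Delta n w (\<gamma>::'k::field) b) \<subseteq> Bidx n \<times> Bidx n"
proof -
  obtain i j k where b: "b = (i, j, k)" "j < n" "i < n"
    using assms by (auto simp: Bidx_def)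
  then have n_pos: "0 < n" by simp
  have "supp ((tmul n w \<gamma> (Delta_y n w) ^^ m) (tens hone hone)) \<subseteq> Bidx n \<times> Bidx n" for m
  proof (induction m)
    case 0
    show ?case
      using supp_tens_subset[of "hone::_\<Rightarrow>'k" "hone::_\<Rightarrow>'k"] n_pos
      by (auto simp: hone_def Bidx_def)
  next
    case (Suc m)
    then show ?case
      by (simp add: supp_tmul_subset_Bidx supp_Delta_y_subset_Bidx n_pos)
  qed
  moreover have "supp (tens (ind (0, j, k)) (ind (0, j, k)) :: _ \<Rightarrow> 'k) \<subseteq> Bidx n \<times> Bidx n"
    using supp_tens_subset b by (fastforce simp: Bidx_def)
  ultimately show ?thesis
    unfolding b Delta_def by (simp add: supp_tmul_subset_Bidx)
qed

lemma Delta2_middle_in_Bidx: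
  assumes b: "b \<in> Bidx n" and t: "t \<in> supp (Delta2 n w (\<gamma>::'k::field) b)"
  shows "fst (snd t) \<in> Bidx n"
proof -
  obtain b1 b2 b3 where t_eq: "t = (b1, b2, b3)"
    by (cases t) auto
  from t obtain c where c1: "Delta n w \<gamma> b (c, b3) \<noteq> 0" and c2: "Delta n w \<gamma> c (b1, b2) \<noteq> 0"
    unfolding t_eq Delta2_def supp_def by (auto elim!: sum.not_neutral_contains_not_neutral)
  from c1 supp_Delta_subset_Bidx[OF b] have "c \<in> Bidx n"
    by (auto simp: supp_def)
  from c2 supp_Delta_subset_Bidx[OF this] show ?thesis
    by (auto simp: supp_def t_eq)
qed

lemma hact_ind: "hact scale rho (ind b :: _ \<Rightarrow> 'k::field) u = scale 1 (rho b u)"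
  by (simp add: hact_def) (simp add: ind_def)

lemma hact_scaled_ind:
  "(a::'k::field) \<noteq> 0 \<Longrightarrow> hact scale rho (\<lambda>c. a * ind b c) u = scale a (rho b u)"
  by (simp add: hact_def supp_scaled_ind) (simp add: ind_def)

lemma hpow_y_el: "i < n \<Longrightarrow> hpow n w (\<gamma>::'k::field) (y_el n w) i = ind (i, 0, 0)"
proof (induction i)
  case 0
  then show ?case by (simp add: hpow_def hone_def)
next
  case (Suc i)
  have "hmul n w \<gamma> (ind b1) (ind b2) = bmul n w \<gamma> b1 b2" for b1 b2
    by (simp add: hmul_def) (simp add: ind_def)
  moreover have "y_el n w = (ind (1, 0, 0) :: _ \<Rightarrow> 'k)"
    using Suc.prems by (simp add: y_el_def mono_eq_ind)
  ultimately show ?case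
    using Suc by (simp add: hpow_def bmul_eq_scaled_ind)
qed

lemma inj_on_power_lessThan:
  fixes \<gamma> :: "'a::idom"
  assumes "\<gamma> \<noteq> 0" and "\<forall>m. 0 < m \<and> m < n \<longrightarrow> \<gamma> ^ m \<noteq> 1"
  shows "inj_on (\<lambda>i. \<gamma> ^ i) {..<n}"
proof -
  have "\<gamma> ^ i \<noteq> \<gamma> ^ i'" if "i < i'" "i' < n" for i i'
  proof
    assume "\<gamma> ^ i = \<gamma> ^ i'"
    moreover have "\<gamma> ^ i' = \<gamma> ^ i * \<gamma> ^ (i' - i)"
      using \<open>i < i'\<close> by (simp flip: power_add)
    ultimately have "\<gamma> ^ i * \<gamma> ^ (i' - i) = \<gamma> ^ i * 1"
      by simp
    then have "\<gamma> ^ (i' - i) = 1"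
      using assms(1) by simp
    then show False
      using assms(2) that by auto
  qed
  then show ?thesis
    by (intro inj_onI) (metis lessThan_iff linorder_neqE_nat)
qed

section \<open>Eigenvectors and bases\<close>

lemma (in vector_space) eigenvector_lincomb_eq_0:
  assumes "finite S" and T: "module_hom scale scale T"
    and "\<And>i. i \<in> S \<Longrightarrow> T (u i) = scale (l i) (u i)"
    and "inj_on l S" and "\<And>i. i \<in> S \<Longrightarrow> u i \<noteq> 0"
    and "(\<Sum>i\<in>S. scale (c i) (u i)) = 0"
  shows "\<forall>i\<in>S. c i = 0"
  using assms(1,3-)
proof (induction S arbitrary: c rule: finite_induct)
  case empty
  then show ?case by simp
next
  case (insert a F)
  have sum_0: "scale (c a) (u a) + (\<Sum>i\<in>F. scale (c i) (u i)) = 0"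
    using insert by simp
  \<comment> \<open>subtract l a times the relation from its image under T, which kills the u a term\<close>
  have "T (scale (c a) (u a) + (\<Sum>i\<in>F. scale (c i) (u i))) =
      scale (c a * l a) (u a) + (\<Sum>i\<in>F. scale (c i * l i) (u i))"
    using insert.prems(1)
    by (simp add: module_hom.add[OF T] module_hom.sum[OF T] module_hom.scale[OF T] mult.commute)
  moreover have "scale (l a) (scale (c a) (u a) + (\<Sum>i\<in>F. scale (c i) (u i))) =
      scale (c a * l a) (u a) + (\<Sum>i\<in>F. scale (l a * c i) (u i))"
    by (simp add: scale_right_distrib scale_sum_right mult.commute)
  ultimately have "(\<Sum>i\<in>F. scale (c i * l i) (u i)) - (\<Sum>i\<in>F. scale (l a * c i) (u i)) = 0"
    using sum_0 module_hom.zero[OF T] by (metis add_diff_cancel_left' diff_self scale_zero_right)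
  then have "(\<Sum>i\<in>F. scale (c i * (l i - l a)) (u i)) = 0"
    by (simp add: sum_subtractf[symmetric] algebra_simps)
  then have "\<forall>i\<in>F. c i * (l i - l a) = 0"
    using insert.IH[of "\<lambda>i. c i * (l i - l a)"] insert.prems by (auto simp: inj_on_insert)
  moreover have "\<forall>i\<in>F. l i \<noteq> l a"
    using insert.prems(2) insert.hyps(2) by (auto simp: inj_on_def)
  ultimately have c_F: "\<forall>i\<in>F. c i = 0"
    by simp
  with sum_0 have "scale (c a) (u a) = 0"
    by simp
  with insert.prems(3)[of a] c_F show ?case
    by simp
qed

lemma (in vector_space) eigenvectors_independent:
  assumes "finite S" and T: "module_hom scale scale T"
    and eig: "\<And>i. i \<in> S \<Longrightarrow> T (u i) = scale (l i) (u i)"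
    and l: "inj_on l S" and nz: "\<And>i. i \<in> S \<Longrightarrow> u i \<noteq> 0"
  shows "inj_on u S \<and> independent (u ` S)"
proof
  show u: "inj_on u S"
  proof (rule inj_onI)
    fix i i' assume i: "i \<in> S" "i' \<in> S" "u i = u i'"
    then have "scale (l i) (u i) = scale (l i') (u i)"
      using eig by metis
    with nz[OF i(1)] have "l i = l i'"
      by simp
    with l i show "i = i'"
      by (auto dest: inj_onD)
  qed
  show "independent (u ` S)"
  proof (rule independent_if_scalars_zero)
    fix f x assume "(\<Sum>x\<in>u ` S. scale (f x) x) = 0" and "x \<in> u ` S"
    then show "f x = 0"
      using eigenvector_lincomb_eq_0[OF assms, of "\<lambda>i. f (u i)"]
      by (auto simp: sum.reindex[OF u])
  qed (use assms in simp)
qed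

lemma (in vector_space) initial_segment_basis:
  fixes f :: "nat \<Rightarrow> 'b"
  assumes span_f: "span (f ` {..<n}) = UNIV"
    and dim_eq: "dim (UNIV :: 'b set) = p + 1"
    and zero_Suc: "\<And>i. Suc i < n \<Longrightarrow> f i = 0 \<Longrightarrow> f (Suc i) = 0"
    and indep: "inj_on f {i. i < n \<and> f i \<noteq> 0}" "independent (f ` {i. i < n \<and> f i \<noteq> 0})"
  shows "p < n \<and> inj_on f {0..p} \<and> independent (f ` {0..p}) \<and> span (f ` {0..p}) = UNIV"
proof -
  define S where "S = {i. i < n \<and> f i \<noteq> 0}"
  have zero_add: "f (i + d) = 0" if "i + d < n" "f i = 0" for i d
    using that
  proof (induction d)
    case (Suc d)
    then show ?case
      using zero_Suc[of "i + d"] by simp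
  qed simp
  have "span (f ` {..<n}) \<subseteq> span (insert 0 (f ` S))"
    by (intro span_mono) (auto simp: S_def)
  then have span_S: "span (f ` S) = UNIV"
    using span_f by auto
  have "card (f ` S) = p + 1"
    using dim_span_eq_card_independent[OF indep(2)[folded S_def]] span_S dim_eq by simp
  then have card_S: "card S = p + 1"
    using card_image[OF indep(1)[folded S_def]] by simp
  have "S \<subseteq> {0..p}"
  proof
    fix i assume "i \<in> S"
    have "x \<in> S" if "x \<le> i" for x
      using zero_add[of x "i - x"] that \<open>i \<in> S\<close> by (auto simp: S_def)
    then have "{0..i} \<subseteq> S"
      by auto
    then have "card {0..i} \<le> card S"
      by (intro card_mono) (simp_all add: S_def)
    then show "i \<in> {0..p}"
      using card_S by simp
  qed
  then have S_eq: "S = {0..p}"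
    using card_S by (intro card_subset_eq) simp_all
  then have "p \<in> S"
    by simp
  then have "p < n"
    by (simp add: S_def)
  with indep[folded S_def, unfolded S_eq] span_S[unfolded S_eq] show ?thesis
    by (intro conjI)
qed

section \<open>Yetter-Drinfeld modules over B(n,w,gamma)\<close>

locale B_YD_module =
  fixes n w :: nat and \<gamma> :: "'k::field"
    and scale :: "'k \<Rightarrow> 'v::ab_group_add \<Rightarrow> 'v"
    and rho :: "idx \<Rightarrow> 'v \<Rightarrow> 'v" and delta :: "'v \<Rightarrow> idx \<Rightarrow> 'v"
  assumes YD: "YD_module n w \<gamma> scale rho delta"
    and n_pos: "0 < n" and gamma_nonzero: "\<gamma> \<noteq> 0"
begin

sublocale vector_space scale
  using YD by (simp add: YD_module_def)

lemma rho_hom: "b \<in> Bidx n \<Longrightarrow> module_hom scale scale (rho b)"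
  using YD unfolding YD_module_def linear_iff_module_hom by blast

lemma rho_scale: "b \<in> Bidx n \<Longrightarrow> rho b (scale a u) = scale a (rho b u)"
  using rho_hom module_hom.scale by metis

lemma rho_add: "b \<in> Bidx n \<Longrightarrow> rho b (u + u') = rho b u + rho b u'"
  using rho_hom module_hom.add by metis

lemma rho_zero: "b \<in> Bidx n \<Longrightarrow> rho b 0 = 0"
  using rho_hom module_hom.zero by metis

lemma rho_unit [simp]: "rho (0, 0, 0) u = u"
  using YD by (simp add: YD_module_def)

lemma rho_rho:
  "b1 \<in> Bidx n \<Longrightarrow> b2 \<in> Bidx n \<Longrightarrow> rho b1 (rho b2 u) = hact scale rho (bmul n w \<gamma> b1 b2) u"
  using YD by (simp add: YD_module_def)

lemma rho_rho_eq_scale: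
  assumes "i + i' < n" "j + j' < n"
  shows "rho (i, j, k) (rho (i', j', k') u) = scale (\<gamma> ^ (i * j')) (rho (i + i', j + j', k + k') u)"
proof -
  have "(i, j, k) \<in> Bidx n" "(i', j', k') \<in> Bidx n"
    using assms by (auto simp: Bidx_def)
  then show ?thesis
    using assms gamma_nonzero by (simp add: rho_rho bmul_eq_scaled_ind hact_scaled_ind)
qed

lemma delta_hom: "module_hom scale scale (\<lambda>u. delta u c)"
  using YD unfolding YD_module_def linear_iff_module_hom by blast

lemma delta_rho:
  "b \<in> Bidx n \<Longrightarrow> delta (rho b u) d =
     (\<Sum>t\<in>supp (Delta2 n w \<gamma> b). \<Sum>u'\<in>supp (delta u).
        scale (Delta2 n w \<gamma> b t *
               hmul n w \<gamma> (hmul n w \<gamma> (ind (fst t)) (ind u')) (Santi n w \<gamma> (snd (snd t))) d)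
              (rho (fst (snd t)) (delta u u')))"
  using YD unfolding YD_module_def by blast

lemma hact_hom:
  assumes "supp h \<subseteq> Bidx n"
  shows "module_hom scale scale (hact scale rho h)"
proof -
  interpret module_pair scale scale
    by unfold_locales
  have "module_hom scale scale (\<lambda>u. scale (h b) (rho b u))" if "b \<in> supp h" for b
    using that assms by (intro module_hom_scale rho_hom) auto
  then show ?thesis
    unfolding hact_def by (intro module_hom_sum) (auto simp: module_axioms)
qed

definition generated_submodule :: "'v \<Rightarrow> 'v set" where
  "generated_submodule u = span ((\<lambda>b. rho b u) ` Bidx n)"

lemma hact_in_generated_submodule:
  "supp h \<subseteq> Bidx n \<Longrightarrow> hact scale rho h u \<in> generated_submodule u"
  unfolding hact_def generated_submodule_def
  by (intro span_sum span_scale span_base) auto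

lemma rho_in_generated_submodule:
  assumes b: "b \<in> Bidx n" and x: "x \<in> generated_submodule u"
  shows "rho b x \<in> generated_submodule u"
  using x unfolding generated_submodule_def
proof (induction rule: span_induct_alt)
  case base
  then show ?case
    by (simp add: rho_zero[OF b] span_zero)
next
  case (step a x y)
  then obtain b' where b': "b' \<in> Bidx n" "x = rho b' u"
    by auto
  then have "rho b x \<in> generated_submodule u"
    using b by (simp add: rho_rho hact_in_generated_submodule supp_bmul_subset_Bidx)
  with step show ?case
    using b by (simp add: rho_add rho_scale span_add span_scale generated_submodule_def)
qed

lemma delta_in_generated_submodule:
  assumes u: "\<And>c. delta u c \<in> span {u}" and x: "x \<in> generated_submodule u"
  shows "delta x c \<in> generated_submodule u"
  using x unfolding generated_submodule_def
proof (induction rule: span_induct_alt)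
  case base
  then show ?case
    using module_hom.zero[OF delta_hom] by (metis span_zero)
next
  case (step a x y)
  then obtain b where b: "b \<in> Bidx n" "x = rho b u"
    by auto
  have "delta x c \<in> span ((\<lambda>b. rho b u) ` Bidx n)"
    unfolding b(2) delta_rho[OF b(1)]
  proof (intro span_sum span_scale)
    fix t u' assume t: "t \<in> supp (Delta2 n w \<gamma> b)"
    obtain a' where "delta u u' = scale a' u"
      using u[of u'] by (auto simp: span_singleton)
    moreover have "fst (snd t) \<in> Bidx n"
      using Delta2_middle_in_Bidx[OF b(1) t] .
    ultimately show "rho (fst (snd t)) (delta u u') \<in> span ((\<lambda>b. rho b u) ` Bidx n)"
      by (simp add: rho_scale span_scale span_base)
  qed
  moreover have "delta (scale a x + y) c = scale a (delta x c) + delta y c"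
    using module_hom.add[OF delta_hom] module_hom.scale[OF delta_hom] by simp
  ultimately show ?case
    using step.IH by (simp add: span_add span_scale)
qed

lemma generated_submodule_eq_UNIV:
  assumes "YD_simple n w \<gamma> scale rho delta" and "u \<noteq> 0"
    and "\<And>c. delta u c \<in> span {u}"
  shows "generated_submodule u = UNIV"
proof -
  have "u \<in> generated_submodule u"
    using n_pos rho_unit[of u] unfolding generated_submodule_def
    by (intro span_base image_eqI[where x = "(0, 0, 0)"]) (auto simp: Bidx_def)
  moreover have "subspace (generated_submodule u)"
    by (simp add: generated_submodule_def)
  ultimately show ?thesis
    using assms rho_in_generated_submodule delta_in_generated_submodule
    unfolding YD_simple_def by blast
qed

lemma rho_x_power:
  assumes "hact scale rho x_el v = scale \<alpha> v" and "\<alpha> \<noteq> 0"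
  shows "rho (0, 0, k) v = scale (\<alpha> powi k) v"
proof (induction k rule: int_induct[where k = 0])
  case base
  then show ?case by simp
next
  case (step1 k)
  have "rho (0, 0, 1 + k) v = rho (0, 0, 1) (rho (0, 0, k) v)"
    using rho_rho_eq_scale[of 0 0 0 0 1 k] n_pos by simp
  also have "\<dots> = scale (\<alpha> powi (k + 1)) v"
    using step1 assms n_pos
    by (simp add: rho_scale Bidx_def x_el_def hact_ind power_int_add_1)
  finally show ?case
    by (simp add: add.commute)
next
  case (step2 k)
  have "rho (0, 0, -1) (rho (0, 0, 1) v) = v"
    using rho_rho_eq_scale[of 0 0 0 0 "-1" 1] n_pos by simp
  then have "scale \<alpha> (rho (0, 0, -1) v) = v"
    using assms n_pos by (simp add: x_el_def hact_ind rho_scale Bidx_def)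
  then have "rho (0, 0, -1) v = scale (inverse \<alpha>) v"
    by (metis assms(2) left_inverse scale_one scale_scale)
  moreover have "rho (0, 0, k - 1) v = rho (0, 0, -1) (rho (0, 0, k) v)"
    using rho_rho_eq_scale[of 0 0 0 0 "-1" k] n_pos by simp
  ultimately show ?case
    using step2 assms n_pos
    by (simp add: rho_scale Bidx_def power_int_diff field_simps)
qed

lemma rho_grouplike:
  assumes x: "hact scale rho x_el v = scale \<alpha> v" "\<alpha> \<noteq> 0"
    and g: "hact scale rho (g_el n w) v = scale \<beta> v" and "j < n"
  shows "rho (0, j, k) v = scale (\<beta> ^ j * \<alpha> powi k) v"
  using \<open>j < n\<close>
proof (induction j)
  case 0
  then show ?case
    using rho_x_power[OF x] by simp
next
  case (Suc j)
  have "rho (0, Suc j, k) v = rho (0, 1, 0) (rho (0, j, k) v)"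
    using rho_rho_eq_scale[of 0 0 1 j 0 k] Suc.prems by simp
  also have "\<dots> = scale (\<beta> ^ Suc j * \<alpha> powi k) v"
    using Suc g by (simp add: rho_scale Bidx_def g_el_def mono_eq_ind hact_ind mult_ac)
  finally show ?case .
qed

lemma rho_eq_scale_y_power:
  assumes x: "hact scale rho x_el v = scale \<alpha> v" "\<alpha> \<noteq> 0"
    and g: "hact scale rho (g_el n w) v = scale \<beta> v" and "i < n" "j < n"
  shows "rho (i, j, k) v = scale (inverse (\<gamma> ^ (i * j)) * \<beta> ^ j * \<alpha> powi k) (rho (i, 0, 0) v)"
proof -
  have "scale (\<gamma> ^ (i * j)) (rho (i, j, k) v) = rho (i, 0, 0) (rho (0, j, k) v)"
    using rho_rho_eq_scale[of i 0 0 j 0 k] assms by simp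
  also have "\<dots> = scale (\<beta> ^ j * \<alpha> powi k) (rho (i, 0, 0) v)"
    using assms by (simp add: rho_grouplike[OF x g] rho_scale Bidx_def)
  finally show ?thesis
    using gamma_nonzero by (metis left_inverse mult.assoc power_not_zero scale_one scale_scale)
qed

lemma span_y_powers:
  assumes "YD_simple n w \<gamma> scale rho delta"
    and std: "standard_elt n w \<gamma> scale rho delta v \<alpha> \<beta> j k"
  shows "span ((\<lambda>i. rho (i, 0, 0) v) ` {..<n}) = UNIV"
proof -
  obtain x: "hact scale rho x_el v = scale \<alpha> v" "\<alpha> \<noteq> 0"
    and g: "hact scale rho (g_el n w) v = scale \<beta> v"
    and "v \<noteq> 0" and delta_v: "\<And>c. delta v c = (if c = (0, j, k) then v else 0)"
    using std unfolding standard_elt_def by blast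
  have "delta v c \<in> span {v}" for c
    by (simp add: delta_v span_base span_zero)
  with assms(1) \<open>v \<noteq> 0\<close> have "generated_submodule v = UNIV"
    by (rule generated_submodule_eq_UNIV)
  moreover have "rho b v \<in> span ((\<lambda>i. rho (i, 0, 0) v) ` {..<n})" if b_in: "b \<in> Bidx n" for b
  proof -
    obtain i j' k' where b: "b = (i, j', k')" "i < n" "j' < n"
      using b_in by (auto simp: Bidx_def)
    then have "rho (i, 0, 0) v \<in> span ((\<lambda>i. rho (i, 0, 0) v) ` {..<n})"
      by (intro span_base) simp
    then show ?thesis
      using rho_eq_scale_y_power[OF x g b(2,3), of k'] b(1) by (metis span_scale)
  qed
  then have "generated_submodule v \<subseteq> span ((\<lambda>i. rho (i, 0, 0) v) ` {..<n})"
    unfolding generated_submodule_def by (intro span_minimal) auto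
  ultimately show ?thesis
    by auto
qed

lemma g_el_eigen:
  assumes x: "hact scale rho x_el v = scale \<alpha> v" "\<alpha> \<noteq> 0"
    and g: "hact scale rho (g_el n w) v = scale \<beta> v" and "i < n"
  shows "hact scale rho (g_el n w) (rho (i, 0, 0) v) =
    scale (\<beta> * inverse (\<gamma> ^ i)) (rho (i, 0, 0) v)"
proof (cases "n = 1")
  case True
  then show ?thesis
    using assms by simp
next
  case False
  then have "hact scale rho (g_el n w) u = rho (0, 1, 0) u" for u
    using n_pos by (simp add: g_el_def mono_eq_ind hact_ind)
  moreover have "rho (0, 1, 0) (rho (i, 0, 0) v) = rho (i, 1, 0) v"
    using rho_rho_eq_scale[of 0 i 1 0 0 0] assms False n_pos by simp
  ultimately show ?thesis
    using rho_eq_scale_y_power[OF x g \<open>i < n\<close>, of 1 0] False n_pos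
    by (simp add: mult.commute)
qed

lemma rho_y_power_eq_0_Suc:
  assumes "Suc i < n" and "rho (i, 0, 0) u = 0"
  shows "rho (Suc i, 0, 0) u = 0"
proof -
  have "rho (Suc i, 0, 0) u = rho (1, 0, 0) (rho (i, 0, 0) u)"
    using rho_rho_eq_scale[of 1 i 0 0 0 0] assms(1) by simp
  then show ?thesis
    using assms by (simp add: rho_zero Bidx_def)
qed

end

theorem lemma3p5:
  fixes n w p :: nat and \<gamma> :: "'k::field_char_0"
    and scale :: "'k \<Rightarrow> 'v::ab_group_add \<Rightarrow> 'v"
    and rho :: "idx \<Rightarrow> 'v \<Rightarrow> 'v" and delta :: "'v \<Rightarrow> idx \<Rightarrow> 'v"
    and v :: 'v and \<alpha> \<beta> :: 'k and j :: nat and k :: int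
  assumes alg_closed: "\<forall>q :: 'k poly. degree q > 0 \<longrightarrow> (\<exists>z. poly q z = 0)"
    and n_pos: "n > 0" and w_pos: "w > 0"
    and prim: "\<gamma> ^ n = 1" "\<forall>m. 0 < m \<and> m < n \<longrightarrow> \<gamma> ^ m \<noteq> 1"
    and simple: "YD_simple n w \<gamma> scale rho delta"
    and dim: "vector_space.dim scale (UNIV :: 'v set) = p + 1"
    and std: "standard_elt n w \<gamma> scale rho delta v \<alpha> \<beta> j k"
  shows "inj_on (\<lambda>i. hact scale rho (hpow n w \<gamma> (y_el n w) i) v) {0..p} \<and>
         \<not> module.dependent scale ((\<lambda>i. hact scale rho (hpow n w \<gamma> (y_el n w) i) v) ` {0..p}) \<and>
         module.span scale ((\<lambda>i. hact scale rho (hpow n w \<gamma> (y_el n w) i) v) ` {0..p}) = UNIV"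
proof -
  have gamma_nonzero: "\<gamma> \<noteq> 0"
    using prim(1) n_pos by (auto simp: power_0_left)
  interpret B_YD_module n w \<gamma> scale rho delta
    using simple n_pos gamma_nonzero by unfold_locales (simp add: YD_simple_def)
  obtain x: "hact scale rho x_el v = scale \<alpha> v" "\<alpha> \<noteq> 0"
    and g: "hact scale rho (g_el n w) v = scale \<beta> v" and "\<beta> \<noteq> 0"
    using std by (simp add: standard_elt_def)
  define f where "f = (\<lambda>i. rho (i, 0, 0) v)"
  define S where "S = {i. i < n \<and> f i \<noteq> 0}"
  have "inj_on (\<lambda>i. \<beta> * inverse (\<gamma> ^ i)) S"
    using inj_on_power_lessThan[OF gamma_nonzero prim(2)] \<open>\<beta> \<noteq> 0\<close>
    by (auto simp: S_def inj_on_def)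
  then have "inj_on f S \<and> independent (f ` S)"
    by (intro eigenvectors_independent[OF _ hact_hom[of "g_el n w"]])
      (auto simp: S_def f_def g_el_eigen[OF x g] supp_g_el_subset_Bidx n_pos)
  moreover have "Suc i < n \<Longrightarrow> f i = 0 \<Longrightarrow> f (Suc i) = 0" for i
    by (simp add: f_def rho_y_power_eq_0_Suc)
  ultimately have basis: "p < n \<and> inj_on f {0..p} \<and> independent (f ` {0..p}) \<and> span (f ` {0..p}) = UNIV"
    using initial_segment_basis[OF span_y_powers[OF simple std, folded f_def] dim] by (simp add: S_def)
  have "hact scale rho (hpow n w \<gamma> (y_el n w) i) v = f i" if "i \<in> {0..p}" for i
    using that basis by (simp add: hpow_y_el hact_ind f_def)
  then have "inj_on (\<lambda>i. hact scale rho (hpow n w \<gamma> (y_el n w) i) v) {0..p} = inj_on f {0..p}"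
    and "(\<lambda>i. hact scale rho (hpow n w \<gamma> (y_el n w) i) v) ` {0..p} = f ` {0..p}"
    by (auto intro!: inj_on_cong image_cong)
  with basis show ?thesis
    by simp
qed

end
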